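(* Let $g\in C^{\omega}(\mathbb{R})$ satisfy (G). Suppose $X_{\rm toy}\neq\emptyset$. If $\beta\in X_{\rm toy}$, then the toy tip solution $(\rho_\beta,r_\beta)$ is a toy steady tip growth solution.
   Context: Condition (G) on real-analytic $g:\mathbb{R}\to\mathbb{R}$: $g(v)>0$, $g'(v)\ge0$, $\frac{d^2}{dv^2}(v^2g(v^2))>0$ for all $v>0$, and $\lim_{v\to\infty}v g(v^2)=\infty$. Toy model: $\rho'=\frac32\frac{1-\rho^2}{r}\Big(-1+\frac{\sqrt{1-\rho^2}(\beta r^2g(r^2)+\rho)}{r}\Big)$, $r'=\rho$ (prime $=d/ds$) on $M_0=(-1,1)\times\mathbb{R}_{>0}$. For a solution on $(0,s_{\max})$: (S1) $\lim_{s\to0^+}\rho=1$, $\lim r=0$, $\lim\sqrt{1-\rho^2}/r=\eta_0>0$; (S2) there exist $s_0>0$ and real-analytic $G:(-a,a)\to\mathbb{R}_{>0}$, $a=r(s_0)^2$, with $\rho(s)=G(r(s)^2)$ on $(0,s_0)$; (S3) defined on $(0,\infty)$ with $\rho'<0,\rho>0$ for all $s>0$; (S4) $\lim_{s\to\infty}\rho=0$, $\lim_{s\to\infty} r=r_\infty>0$. A toy steady tip growth solution satisfies (S1)–(S4). A toy tip solution satisfies (S1), (S2) and $\rho'<0,\rho>0$ on some $(0,s_0)$, $s_0>0$. For each $\beta\ge0$ there is a unique maximal toy tip solution, denoted $(\rho_\beta,r_\beta)$. Sets: $A_{\rm toy}=\{\beta>0:\exists s_0>0,\ \rho_\beta(s)\rho_\beta'(s)<0\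 \forall s\in(0,s_0),\ \rho_\beta(s_0)=0\}$; $B_{\rm toy}=\{\beta>0:\exists s_0>0,\ \rho_\beta(s)\rho_\beta'(s)<0\ \forall s\in(0,s_0),\ \rho_\beta'(s_0)=0\}$; $X_{\rm toy}=\mathbb{R}_{>0}\setminus(A_{\rm toy}\cup B_{\rm toy})$. *)

theory Defs
  imports "HOL-Analysis.Analysis"
begin

definition real_analytic_on :: "real set \<Rightarrow> (real \<Rightarrow> real) \<Rightarrow> bool" where
  "real_analytic_on S f \<longleftrightarrow>
     (\<forall>x\<in>S. \<exists>c::nat \<Rightarrow> real. \<exists>\<delta>>0. ball x \<delta> \<subseteq> S \<and>
        (\<forall>y. \<bar>y - x\<bar> < \<delta> \<longrightarrow> (\<lambda>n. c n * (y - x) ^ n) sums f y))"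

definition condG :: "(real \<Rightarrow> real) \<Rightarrow> bool" where
  "condG g \<longleftrightarrow>
     (\<forall>v>0. g v > 0 \<and> deriv g v \<ge> 0 \<and> deriv (deriv (\<lambda>w. w^2 * g (w^2))) v > 0)
     \<and> filterlim (\<lambda>v. v * g (v^2)) at_top at_top"

definition toy_rhs :: "(real \<Rightarrow> real) \<Rightarrow> real \<Rightarrow> real \<Rightarrow> real \<Rightarrow> real" where
  "toy_rhs g \<beta> \<rho> r =
     3/2 * (1 - \<rho>^2) / r * (-1 + sqrt (1 - \<rho>^2) * (\<beta> * r^2 * g (r^2) + \<rho>) / r)"

definition sdom :: "ereal \<Rightarrow> real set" where
  "sdom smax = {s. 0 < s \<and> ereal s < smax}"

definition toy_solution :: "(real \<Rightarrow> real) \<Rightarrow> real \<Rightarrow> (real \<Rightarrow> real) \<Rightarrow> (real \<Rightarrow> real) \<Rightarrow> ereal \<Rightarrow> bool" where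
  "toy_solution g \<beta> \<rho> r smax \<longleftrightarrow> 0 < smax \<and>
     (\<forall>s\<in>sdom smax. -1 < \<rho> s \<and> \<rho> s < 1 \<and> 0 < r s \<and>
        (\<rho> has_real_derivative toy_rhs g \<beta> (\<rho> s) (r s)) (at s) \<and>
        (r has_real_derivative \<rho> s) (at s))"

definition toy_S1 :: "(real \<Rightarrow> real) \<Rightarrow> (real \<Rightarrow> real) \<Rightarrow> bool" where
  "toy_S1 \<rho> r \<longleftrightarrow> (\<rho> \<longlongrightarrow> 1) (at_right 0) \<and> (r \<longlongrightarrow> 0) (at_right 0) \<and>
     (\<exists>\<eta>0>0. ((\<lambda>s. sqrt (1 - (\<rho> s)^2) / r s) \<longlongrightarrow> \<eta>0) (at_right 0))"

definition toy_S2 :: "(real \<Rightarrow> real) \<Rightarrow> (real \<Rightarrow> real) \<Rightarrow> ereal \<Rightarrow> bool" where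
  "toy_S2 \<rho> r smax \<longleftrightarrow> (\<exists>s0. s0 \<in> sdom smax \<and>
     (\<exists>G. real_analytic_on {- ((r s0)^2) <..< (r s0)^2} G \<and>
          (\<forall>v\<in>{- ((r s0)^2) <..< (r s0)^2}. G v > 0) \<and>
          (\<forall>s\<in>{0<..<s0}. \<rho> s = G ((r s)^2))))"

definition toy_tip_solution :: "(real \<Rightarrow> real) \<Rightarrow> real \<Rightarrow> (real \<Rightarrow> real) \<Rightarrow> (real \<Rightarrow> real) \<Rightarrow> ereal \<Rightarrow> bool" where
  "toy_tip_solution g \<beta> \<rho> r smax \<longleftrightarrow> toy_solution g \<beta> \<rho> r smax \<and> toy_S1 \<rho> r \<and> toy_S2 \<rho> r smax \<and>
     (\<exists>s0>0. ereal s0 \<le> smax \<and> (\<forall>s\<in>{0<..<s0}. deriv \<rho> s < 0 \<and> \<rho> s > 0))"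

definition max_toy_tip_solution :: "(real \<Rightarrow> real) \<Rightarrow> real \<Rightarrow> (real \<Rightarrow> real) \<Rightarrow> (real \<Rightarrow> real) \<Rightarrow> ereal \<Rightarrow> bool" where
  "max_toy_tip_solution g \<beta> \<rho> r smax \<longleftrightarrow> toy_tip_solution g \<beta> \<rho> r smax \<and>
     (\<forall>\<rho>2 r2 smax2. toy_solution g \<beta> \<rho>2 r2 smax2 \<and> smax \<le> smax2 \<and>
        (\<forall>s\<in>sdom smax. \<rho>2 s = \<rho> s \<and> r2 s = r s) \<longrightarrow> smax2 = smax)"

definition toy_steady_tip_growth :: "(real \<Rightarrow> real) \<Rightarrow> real \<Rightarrow> (real \<Rightarrow> real) \<Rightarrow> (real \<Rightarrow> real) \<Rightarrow> ereal \<Rightarrow> bool" where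
  "toy_steady_tip_growth g \<beta> \<rho> r smax \<longleftrightarrow> toy_solution g \<beta> \<rho> r smax \<and> toy_S1 \<rho> r \<and> toy_S2 \<rho> r smax \<and>
     smax = \<infinity> \<and> (\<forall>s>0. deriv \<rho> s < 0 \<and> \<rho> s > 0) \<and>
     (\<rho> \<longlongrightarrow> 0) at_top \<and> (\<exists>rinf>0. (r \<longlongrightarrow> rinf) at_top)"

definition A_toy :: "(real \<Rightarrow> real) \<Rightarrow> real set" where
  "A_toy g = {\<beta>. \<beta> > 0 \<and> (\<exists>\<rho> r smax. max_toy_tip_solution g \<beta> \<rho> r smax \<and>
     (\<exists>s0\<in>sdom smax. (\<forall>s\<in>{0<..<s0}. \<rho> s * deriv \<rho> s < 0) \<and> \<rho> s0 = 0))}"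

definition B_toy :: "(real \<Rightarrow> real) \<Rightarrow> real set" where
  "B_toy g = {\<beta>. \<beta> > 0 \<and> (\<exists>\<rho> r smax. max_toy_tip_solution g \<beta> \<rho> r smax \<and>
     (\<exists>s0\<in>sdom smax. (\<forall>s\<in>{0<..<s0}. \<rho> s * deriv \<rho> s < 0) \<and> deriv \<rho> s0 = 0))}"

definition X_toy :: "(real \<Rightarrow> real) \<Rightarrow> real set" where
  "X_toy g = {\<beta>. \<beta> > 0} - (A_toy g \<union> B_toy g)"

end

theory Submission
  imports Defs
begin

text \<open>
  Since \<open>\<beta>\<close> lies neither in \<open>A_toy\<close> nor in \<open>B_toy\<close>, the sign pattern \<open>\<rho> > 0\<close>, \<open>\<rho>' < 0\<close>
  of the tip region never breaks down: at a first point where it would, continuity gives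
  \<open>\<rho> \<ge> 0\<close> and \<open>\<rho>' \<le> 0\<close>, and equality in either is exactly the event defining \<open>A_toy\<close>
  or \<open>B_toy\<close>. Along such a solution \<open>\<rho>\<close> decreases and \<open>r\<close> increases with \<open>r' \<le> 1\<close>, so at a
  finite end of the existence interval both have limits inside the phase space \<open>M\<^sub>0\<close>;
  Picard-Lindel\<ouml>f then continues the solution, contradicting maximality. On the global
  solution \<open>r\<close> is bounded, because \<open>r g(r\<^sup>2) \<rightarrow> \<infinity>\<close> would eventually force \<open>\<rho>' > 0\<close>;
  and a bounded increasing \<open>r\<close> with \<open>r' = \<rho>\<close> forces the decreasing \<open>\<rho>\<close> to tend to \<open>0\<close>.
\<close>

section \<open>Analytic preliminaries\<close>

lemma real_analytic_on_imp_C1: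
  assumes "real_analytic_on S g" and "x \<in> S"
  shows real_analytic_on_imp_DERIV: "(g has_real_derivative deriv g x) (at x)"
    and real_analytic_on_imp_isCont_deriv: "isCont (deriv g) x"
proof -
  obtain c :: "nat \<Rightarrow> real" and \<delta> where \<delta>: "\<delta> > 0"
    and sums: "\<And>y. \<bar>y - x\<bar> < \<delta> \<Longrightarrow> (\<lambda>n. c n * (y - x) ^ n) sums g y"
    using assms unfolding real_analytic_on_def by blast
  define P where "P u = (\<Sum>n. c n * u ^ n)" for u
  define D where "D u = (\<Sum>n. diffs c n * u ^ n)" for u
  have summable: "summable (\<lambda>n. c n * u ^ n)" if "\<bar>u\<bar> < \<delta>" for u
    using sums[of "x + u"] that by (simp add: sums_iff)
  have DERIV_g: "(g has_real_derivative D (z - x)) (at z)" if z: "\<bar>z - x\<bar> < \<delta>" for z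
  proof -
    define K where "K = (\<bar>z - x\<bar> + \<delta>) / 2"
    have K: "\<bar>K\<bar> < \<delta>" "\<bar>z - x\<bar> < \<bar>K\<bar>" using z \<delta> by (auto simp: K_def)
    have "(P has_real_derivative D (z - x)) (at (z - x))"
      unfolding P_def D_def by (rule termdiffs_strong[OF summable[OF K(1)]]) (use K in simp)
    moreover have "((\<lambda>y. y - x) has_real_derivative 1) (at z)"
      by (auto intro!: derivative_eq_intros)
    ultimately have "((\<lambda>y. P (y - x)) has_real_derivative D (z - x)) (at z)"
      using DERIV_chain2 by fastforce
    then show ?thesis
      by (rule has_field_derivative_transform_within_open[of _ _ _ "ball x \<delta>"])
         (use z sums in \<open>auto simp: dist_real_def abs_minus_commute P_def sums_iff\<close>)
  qed
  have deriv_g: "deriv g z = D (z - x)" if "\<bar>z - x\<bar> < \<delta>" for z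
    using DERIV_g[OF that] by (rule DERIV_imp_deriv)
  show "(g has_real_derivative deriv g x) (at x)"
    using DERIV_g[of x] deriv_g[of x] \<delta> by simp
  have "summable (\<lambda>n. diffs c n * (\<delta>/2) ^ n)"
    by (rule termdiff_converges[of _ \<delta>]) (use \<delta> summable in auto)
  then have "isCont D 0"
    unfolding D_def by (rule isCont_powser) (use \<delta> in simp)
  then have "isCont (\<lambda>z. D (z - x)) x"
    by (intro isCont_o2[where f="\<lambda>z. z - x" and g=D]) (auto intro!: continuous_intros)
  moreover have "\<forall>\<^sub>F z in nhds x. D (z - x) = deriv g z"
    using eventually_nhds_metric[of _ x] \<delta>
    by (auto simp: dist_real_def intro!: exI[of _ \<delta>] deriv_g[symmetric])
  ultimately show "isCont (deriv g) x"
    using isCont_cong by metis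
qed

context
  fixes F :: "'a::euclidean_space \<Rightarrow> 'a" and p0 :: 'a and t0 h R L M :: real
  assumes h_pos: "h > 0" and R_nonneg: "0 \<le> R"
    and F_bound: "\<And>x. x \<in> cball p0 R \<Longrightarrow> norm (F x) \<le> M"
    and F_lipschitz: "L-lipschitz_on (cball p0 R) F"
begin

definition picard_clamp :: "real \<Rightarrow> real" where
  "picard_clamp t = min (t0 + h) (max t0 t)"

definition picard_space :: "(real \<Rightarrow>\<^sub>C 'a) set" where
  "picard_space = {f. \<forall>t. apply_bcontfun f t \<in> cball p0 R}"

text \<open>The time is clamped to \<open>[t0, t0 + h]\<close>, so that the Picard operator acts on
  bounded continuous functions on the whole real line.\<close>
definition picard_operator :: "(real \<Rightarrow>\<^sub>C 'a) \<Rightarrow> real \<Rightarrow>\<^sub>C 'a" where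
  "picard_operator f =
     Bcontfun (\<lambda>t. p0 + integral {t0..picard_clamp t} (\<lambda>s. F (apply_bcontfun f s)))"

lemma picard_clamp_in: "picard_clamp t \<in> {t0..t0+h}"
  using h_pos by (auto simp: picard_clamp_def)

lemma continuous_on_picard_integrand:
  "f \<in> picard_space \<Longrightarrow> continuous_on A (\<lambda>s. F (apply_bcontfun f s))"
  by (rule continuous_on_compose2[OF lipschitz_on_continuous_on[OF F_lipschitz]])
     (auto simp: picard_space_def)

lemma integrable_picard_integrand:
  "f \<in> picard_space \<Longrightarrow> (\<lambda>s. F (apply_bcontfun f s)) integrable_on {a..b}"
  by (rule integrable_continuous_interval[OF continuous_on_picard_integrand])

lemma picard_bound_nonneg: "0 \<le> M"
  using F_bound[of p0] R_nonneg order_trans[OF norm_ge_zero] by simp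

lemma norm_picard_integral_le:
  assumes f: "f \<in> picard_space" and u: "u \<in> {t0..t0+h}"
  shows "norm (integral {t0..u} (\<lambda>s. F (apply_bcontfun f s))) \<le> M * h"
proof -
  have "norm (integral {t0..u} (\<lambda>s. F (apply_bcontfun f s)))
      \<le> M * Henstock_Kurzweil_Integration.content {t0..u}"
    by (rule has_integral_bound_real[OF picard_bound_nonneg finite.emptyI
          integrable_integral[OF integrable_picard_integrand[OF f]]])
       (use f in \<open>auto simp: picard_space_def intro: F_bound\<close>)
  also have "\<dots> \<le> M * h"
    using u picard_bound_nonneg by (intro mult_left_mono) auto
  finally show ?thesis .
qed

lemma apply_picard_operator:
  assumes "f \<in> picard_space"
  shows "apply_bcontfun (picard_operator f) =
    (\<lambda>t. p0 + integral {t0..picard_clamp t} (\<lambda>s. F (apply_bcontfun f s)))"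
proof -
  let ?I = "\<lambda>u. integral {t0..u} (\<lambda>s. F (apply_bcontfun f s))"
  have "continuous_on UNIV picard_clamp"
    unfolding picard_clamp_def by (intro continuous_intros)
  then have "continuous_on UNIV (\<lambda>t. ?I (picard_clamp t))"
    by (rule continuous_on_compose2[OF
          indefinite_integral_continuous_1[OF integrable_picard_integrand[OF assms]]])
       (use picard_clamp_in in blast)
  moreover have "bounded (range (\<lambda>t. p0 + ?I (picard_clamp t)))"
    using norm_picard_integral_le[OF assms picard_clamp_in]
    by (auto simp: bounded_iff intro!: exI[of _ "norm p0 + M * h"] norm_triangle_le add_left_mono)
  ultimately show ?thesis
    unfolding picard_operator_def
    by (subst Bcontfun_inverse) (auto simp: bcontfun_def intro!: continuous_intros)
qed

lemma picard_operator_in_space: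
  assumes "h * M \<le> R" and "f \<in> picard_space"
  shows "picard_operator f \<in> picard_space"
  using order_trans[OF norm_picard_integral_le[OF assms(2) picard_clamp_in]] assms(1)
  by (auto simp: picard_space_def apply_picard_operator[OF assms(2)] dist_norm mult.commute)

lemma picard_operator_contraction:
  assumes f: "f \<in> picard_space" and g: "g \<in> picard_space"
  shows "dist (picard_operator f) (picard_operator g) \<le> (h * L) * dist f g"
proof (rule dist_bound)
  fix t
  let ?d = "\<lambda>s. F (apply_bcontfun f s) - F (apply_bcontfun g s)"
  have "norm (integral {t0..picard_clamp t} ?d)
      \<le> (L * dist f g) * Henstock_Kurzweil_Integration.content {t0..picard_clamp t}"
  proof (rule has_integral_bound_real[OF _ finite.emptyI])
    show "0 \<le> L * dist f g"
      using lipschitz_on_nonneg[OF F_lipschitz] by simp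
    show "(?d has_integral integral {t0..picard_clamp t} ?d) {t0..picard_clamp t}"
      by (intro integrable_integral integrable_diff integrable_picard_integrand f g)
    fix s
    have "norm (?d s) \<le> L * dist (apply_bcontfun f s) (apply_bcontfun g s)"
      using f g lipschitz_onD[OF F_lipschitz] by (auto simp: picard_space_def dist_norm)
    also have "\<dots> \<le> L * dist f g"
      using dist_bounded lipschitz_on_nonneg[OF F_lipschitz] by (intro mult_left_mono)
    finally show "norm (?d s) \<le> L * dist f g" .
  qed
  also have "\<dots> \<le> (L * dist f g) * h"
    using picard_clamp_in[of t] lipschitz_on_nonneg[OF F_lipschitz]
    by (intro mult_left_mono) auto
  finally show "dist (apply_bcontfun (picard_operator f) t) (apply_bcontfun (picard_operator g) t)
      \<le> (h * L) * dist f g"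
    using integral_diff[OF integrable_picard_integrand[OF f] integrable_picard_integrand[OF g]]
    by (simp add: apply_picard_operator f g dist_norm algebra_simps)
qed

lemma complete_picard_space: "complete picard_space"
proof -
  have "closed ((\<lambda>f::real \<Rightarrow>\<^sub>C 'a. apply_bcontfun f t) -` cball p0 R)" for t
  proof (rule closed_vimage[OF closed_cball])
    have "1-lipschitz_on UNIV (\<lambda>f::real \<Rightarrow>\<^sub>C 'a. apply_bcontfun f t)"
      by (rule lipschitz_onI) (auto simp: dist_bounded)
    then show "continuous_on UNIV (\<lambda>f::real \<Rightarrow>\<^sub>C 'a. apply_bcontfun f t)"
      by (rule lipschitz_on_continuous_on)
  qed
  moreover have "picard_space = (\<Inter>t. (\<lambda>f. apply_bcontfun f t) -` cball p0 R)"
    by (auto simp: picard_space_def)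
  ultimately show ?thesis
    by (simp add: complete_eq_closed closed_INT)
qed

lemma picard_lindeloef_local:
  assumes "h * M \<le> R" and "h * L < 1"
  obtains y where "y t0 = p0"
    and "\<And>t. t \<in> {t0..t0+h} \<Longrightarrow> y t \<in> cball p0 R"
    and "\<And>t. t \<in> {t0..t0+h} \<Longrightarrow> (y has_vector_derivative F (y t)) (at t within {t0..t0+h})"
proof -
  have "const_bcontfun p0 \<in> picard_space"
    using R_nonneg by (auto simp: picard_space_def const_bcontfun.rep_eq)
  moreover have "0 \<le> h * L"
    using h_pos lipschitz_on_nonneg[OF F_lipschitz] by simp
  ultimately obtain f where f: "f \<in> picard_space" "picard_operator f = f"
    using Banach_fix[OF complete_picard_space _ _ assms(2) _ picard_operator_contraction]
      picard_operator_in_space[OF assms(1)] by blast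
  define y where "y = apply_bcontfun f"
  have y_eq: "y t = p0 + integral {t0..t} (\<lambda>s. F (y s))" if "t \<in> {t0..t0+h}" for t
    using apply_picard_operator[OF f(1)] f(2) that
    unfolding y_def by (metis picard_clamp_def atLeastAtMost_iff max.absorb2 min.absorb2)
  show thesis
  proof
    show "y t0 = p0" using y_eq[of t0] h_pos by simp
    show "y t \<in> cball p0 R" for t using f(1) by (simp add: picard_space_def y_def)
    fix t assume t: "t \<in> {t0..t0+h}"
    have "((\<lambda>u. p0 + integral {t0..u} (\<lambda>s. F (y s))) has_vector_derivative F (y t))
        (at t within {t0..t0+h})"
      using integral_has_vector_derivative[OF continuous_on_picard_integrand[OF f(1)] t]
      by (auto simp: y_def intro!: derivative_eq_intros)
    then show "(y has_vector_derivative F (y t)) (at t within {t0..t0+h})"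
      by (rule has_vector_derivative_transform[OF t y_eq, rotated])
  qed
qed

end

definition lipschitzian_on :: "'a::metric_space set \<Rightarrow> ('a \<Rightarrow> real) \<Rightarrow> bool" where
  "lipschitzian_on U f \<longleftrightarrow> (\<exists>L. L-lipschitz_on U f)"

lemma lipschitzian_on_bounded:
  assumes "lipschitzian_on U f" and "compact U"
  obtains B where "\<And>x. x \<in> U \<Longrightarrow> \<bar>f x\<bar> \<le> B"
proof -
  obtain L where "L-lipschitz_on U f"
    using assms(1) by (auto simp: lipschitzian_on_def)
  then have "bounded (f ` U)"
    using assms(2) by (intro compact_imp_bounded compact_continuous_image lipschitz_on_continuous_on)
  then show thesis
    using that by (auto simp: bounded_real)
qed

lemma lipschitzian_on_mult:
  assumes U: "compact U" and f: "lipschitzian_on U f" and g: "lipschitzian_on U g"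
  shows "lipschitzian_on U (\<lambda>x. f x * g x)"
proof -
  obtain Lf where Lf: "Lf-lipschitz_on U f" using f by (auto simp: lipschitzian_on_def)
  obtain Lg where Lg: "Lg-lipschitz_on U g" using g by (auto simp: lipschitzian_on_def)
  obtain A where A: "\<And>x. x \<in> U \<Longrightarrow> \<bar>f x\<bar> \<le> A" using lipschitzian_on_bounded[OF f U] by blast
  obtain B where B: "\<And>x. x \<in> U \<Longrightarrow> \<bar>g x\<bar> \<le> B" using lipschitzian_on_bounded[OF g U] by blast
  have "dist (f x * g x) (f y * g y) \<le> (\<bar>A\<bar> * Lg + \<bar>B\<bar> * Lf) * dist x y"
    if x: "x \<in> U" and y: "y \<in> U" for x y
  proof -
    have "\<bar>f x * (g x - g y)\<bar> \<le> \<bar>A\<bar> * (Lg * dist x y)"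
      unfolding abs_mult using A[OF x] lipschitz_onD[OF Lg x y] lipschitz_on_nonneg[OF Lg]
      by (intro mult_mono) (auto simp: dist_real_def)
    moreover have "\<bar>g y * (f x - f y)\<bar> \<le> \<bar>B\<bar> * (Lf * dist x y)"
      unfolding abs_mult using B[OF y] lipschitz_onD[OF Lf x y] lipschitz_on_nonneg[OF Lf]
      by (intro mult_mono) (auto simp: dist_real_def)
    moreover have "f x * g x - f y * g y = f x * (g x - g y) + g y * (f x - f y)"
      by (simp add: algebra_simps)
    ultimately show ?thesis
      unfolding dist_real_def by (simp add: algebra_simps)
  qed
  then have "(\<bar>A\<bar> * Lg + \<bar>B\<bar> * Lf)-lipschitz_on U (\<lambda>x. f x * g x)"
    using lipschitz_on_nonneg[OF Lf] lipschitz_on_nonneg[OF Lg] by (intro lipschitz_onI) auto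
  then show ?thesis
    unfolding lipschitzian_on_def by blast
qed

lemma lipschitzian_on_add:
  "lipschitzian_on U f \<Longrightarrow> lipschitzian_on U g \<Longrightarrow> lipschitzian_on U (\<lambda>x. f x + g x)"
  unfolding lipschitzian_on_def by (auto intro: lipschitz_on_add)

lemma lipschitzian_on_diff:
  "lipschitzian_on U f \<Longrightarrow> lipschitzian_on U g \<Longrightarrow> lipschitzian_on U (\<lambda>x. f x - g x)"
  unfolding lipschitzian_on_def by (auto intro: lipschitz_on_diff)

lemma lipschitzian_on_const: "lipschitzian_on U (\<lambda>x. c)"
  unfolding lipschitzian_on_def by (auto intro: lipschitz_on_constant)

lemma lipschitzian_on_fst: "lipschitzian_on U (\<lambda>x::real \<times> 'b::metric_space. fst x)"
  unfolding lipschitzian_on_def by (metis lipschitz_onI dist_fst_le mult_1 zero_le_one)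

lemma lipschitzian_on_snd: "lipschitzian_on U (\<lambda>x::'a::metric_space \<times> real. snd x)"
  unfolding lipschitzian_on_def by (metis lipschitz_onI dist_snd_le mult_1 zero_le_one)

lemma lipschitzian_on_compose:
  assumes "lipschitzian_on U f" and "lipschitzian_on V h" and "f ` U \<subseteq> V"
  shows "lipschitzian_on U (\<lambda>x. h (f x))"
  using assms lipschitz_on_compose2 lipschitz_on_subset unfolding lipschitzian_on_def by metis

lemma lipschitzian_on_inverse_atLeast:
  assumes m: "m > 0"
  shows "lipschitzian_on {m..} (\<lambda>u::real. inverse u)"
proof -
  have "dist (inverse x) (inverse y) \<le> 1 / m\<^sup>2 * dist x y" if "m \<le> x" "m \<le> y" for x y :: real
  proof -
    have "dist (inverse x) (inverse y) = \<bar>y - x\<bar> / (x * y)"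
      using that m by (simp add: dist_real_def field_simps abs_div)
    also have "\<dots> \<le> \<bar>y - x\<bar> / m\<^sup>2"
      using that m by (intro divide_left_mono) (auto simp: power2_eq_square intro: mult_mono)
    finally show ?thesis by (simp add: dist_real_def abs_minus_commute)
  qed
  then have "(1 / m\<^sup>2)-lipschitz_on {m..} (\<lambda>u::real. inverse u)"
    using m by (intro lipschitz_onI) auto
  then show ?thesis
    unfolding lipschitzian_on_def by blast
qed

lemma lipschitzian_on_sqrt_atLeast:
  assumes m: "m > 0"
  shows "lipschitzian_on {m..} (\<lambda>u::real. sqrt u)"
proof -
  have "dist (sqrt x) (sqrt y) \<le> 1 / sqrt m * dist x y" if "m \<le> x" "m \<le> y" for x y :: real
  proof -
    have sqrt_ge: "sqrt m \<le> sqrt x" "sqrt m \<le> sqrt y" "0 < sqrt m" using that m by auto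
    have "(sqrt x - sqrt y) * (sqrt x + sqrt y) = x - y"
      using that m by (simp add: algebra_simps)
    then have "\<bar>sqrt x - sqrt y\<bar> * (sqrt x + sqrt y) = \<bar>x - y\<bar>"
      using sqrt_ge by (metis abs_mult abs_of_pos add_pos_pos less_le_trans)
    moreover have "\<bar>sqrt x - sqrt y\<bar> * sqrt m \<le> \<bar>sqrt x - sqrt y\<bar> * (sqrt x + sqrt y)"
      using sqrt_ge by (intro mult_left_mono) linarith+
    ultimately have "\<bar>sqrt x - sqrt y\<bar> * sqrt m \<le> \<bar>x - y\<bar>"
      by simp
    then show ?thesis
      using sqrt_ge(3) by (simp add: dist_real_def field_simps)
  qed
  then have "(1 / sqrt m)-lipschitz_on {m..} (\<lambda>u::real. sqrt u)"
    using m by (intro lipschitz_onI) auto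
  then show ?thesis
    unfolding lipschitzian_on_def by blast
qed

lemma lipschitzian_on_Icc_if_continuous_deriv:
  assumes DERIV: "\<And>x. (g has_real_derivative deriv g x) (at x)"
    and cont: "\<And>x. isCont (deriv g) x"
  shows "lipschitzian_on {a..b} g"
proof -
  have "bounded (deriv g ` {a..b})"
    using cont by (intro compact_imp_bounded compact_continuous_image continuous_at_imp_continuous_on) auto
  then obtain B where B: "\<forall>x\<in>{a..b}. \<bar>deriv g x\<bar> \<le> B"
    by (auto simp: bounded_real)
  have mvt_bound: "\<bar>g v - g u\<bar> \<le> \<bar>B\<bar> * \<bar>v - u\<bar>" if "u \<in> {a..b}" "v \<in> {a..b}" "u < v" for u v
  proof -
    obtain z where z: "u < z" "z < v" "g v - g u = (v - u) * deriv g z"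
      using MVT2[OF \<open>u < v\<close>, of g "deriv g"] DERIV by blast
    have "z \<in> {a..b}" using that z by auto
    with B have "\<bar>deriv g z\<bar> \<le> \<bar>B\<bar>" by (meson abs_ge_self order_trans)
    then show ?thesis using z by (simp add: abs_mult mult.commute mult_right_mono)
  qed
  then have "dist (g x) (g y) \<le> \<bar>B\<bar> * dist x y" if "x \<in> {a..b}" "y \<in> {a..b}" for x y
    using that mvt_bound[of x y] mvt_bound[of y x]
    by (cases x y rule: linorder_cases) (auto simp: dist_real_def abs_minus_commute)
  then have "\<bar>B\<bar>-lipschitz_on {a..b} g"
    by (intro lipschitz_onI) auto
  then show ?thesis
    unfolding lipschitzian_on_def by blast
qed

lemma continuous_on_Icc_at_left:
  fixes f :: "real \<Rightarrow> 'a::topological_space"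
  assumes "a < T" and cont: "\<And>u. u \<in> {a..<T} \<Longrightarrow> isCont f u" and lim: "(f \<longlongrightarrow> f T) (at_left T)"
  shows "continuous_on {a..T} f"
  unfolding continuous_on_eq_continuous_within
proof
  fix x
  assume x: "x \<in> {a..T}"
  show "continuous (at x within {a..T}) f"
  proof (cases "x < T")
    case True
    then show ?thesis
      using cont x by (simp add: continuous_at_imp_continuous_within)
  next
    case False
    then show ?thesis
      using x lim at_within_Icc_at_left[OF \<open>a < T\<close>] by (simp add: continuous_within)
  qed
qed

text \<open>The derivative from the left is recovered by the fundamental theorem of calculus,
  which is where continuity of \<open>G\<close> is needed.\<close>
lemma DERIV_glue_at:
  fixes f G :: "real \<Rightarrow> real"
  assumes aT: "a < T" and Tb: "T < b"
    and left: "\<And>u. u \<in> {a<..<T} \<Longrightarrow> (f has_real_derivative G u) (at u)"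
    and G_cont: "\<And>u. u \<in> {a<..<T} \<Longrightarrow> isCont G u"
    and f_lim: "(f \<longlongrightarrow> f T) (at_left T)" and G_lim: "(G \<longlongrightarrow> G T) (at_left T)"
    and right: "(f has_real_derivative G T) (at T within {T..b})"
  shows "(f has_real_derivative G T) (at T)"
proof -
  define c where "c = (a + T) / 2"
  have c: "a < c" "c < T" using aT by (auto simp: c_def)
  have "continuous_on {c..T} f"
    using c left[THEN DERIV_isCont] f_lim by (intro continuous_on_Icc_at_left) auto
  have "continuous_on {c..T} G"
    using c G_cont G_lim by (intro continuous_on_Icc_at_left) auto
  have f_eq: "f t = f c + integral {c..t} G" if t: "t \<in> {c..T}" for t
  proof -
    have "(G has_integral (f t - f c)) {c..t}"
    proof (rule fundamental_theorem_of_calculus_interior)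
      show "c \<le> t" "continuous_on {c..t} f"
        using t \<open>continuous_on {c..T} f\<close> by (auto elim: continuous_on_subset)
      show "(f has_vector_derivative G u) (at u)" if "u \<in> {c<..<t}" for u
        using left[of u] that t c by (simp add: has_real_derivative_iff_has_vector_derivative)
    qed
    then show ?thesis
      by (simp add: integral_unique)
  qed
  have T: "T \<in> {c..T}" using c by simp
  have "((\<lambda>t. f c + integral {c..t} G) has_vector_derivative G T) (at T within {c..T})"
    using integral_has_vector_derivative[OF \<open>continuous_on {c..T} G\<close> T]
    by (auto intro!: derivative_eq_intros)
  then have "(f has_real_derivative G T) (at T within {c..T})"
    unfolding has_real_derivative_iff_has_vector_derivative
    by (rule has_vector_derivative_transform[OF T f_eq, rotated])
  then have "((\<lambda>y. (f y - f T) / (y - T)) \<longlongrightarrow> G T) (at T within {c..T} \<union> {T..b})"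
    using right unfolding has_field_derivative_iff Lim_within_Un by simp
  moreover have "at T within {c..T} \<union> {T..b} = at T"
    using c Tb by (simp add: ivl_disj_un_two_touch(4) at_within_Icc_at)
  ultimately show ?thesis
    unfolding has_field_derivative_iff by simp
qed

lemma DERIV_glue:
  fixes f G :: "real \<Rightarrow> real"
  assumes aT: "a < T" and Tb: "T < b"
    and left: "\<And>u. u \<in> {a<..<T} \<Longrightarrow> (f has_real_derivative G u) (at u)"
    and right: "\<And>u. u \<in> {T..<b} \<Longrightarrow> (f has_real_derivative G u) (at u within {T..b})"
    and G_cont: "\<And>u. u \<in> {a<..<T} \<Longrightarrow> isCont G u"
    and f_lim: "(f \<longlongrightarrow> f T) (at_left T)" and G_lim: "(G \<longlongrightarrow> G T) (at_left T)"
    and u: "u \<in> {a<..<b}"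
  shows "(f has_real_derivative G u) (at u)"
proof -
  consider "u < T" | "u = T" | "T < u"
    by linarith
  then show ?thesis
  proof cases
    case 1
    then show ?thesis
      using left u by simp
  next
    case 2
    then show ?thesis
      using DERIV_glue_at[OF aT Tb left G_cont f_lim G_lim right] Tb by simp
  next
    case 3
    then have "at u within {T..b} = at u"
      using u by (intro at_within_Icc_at) auto
    then show ?thesis
      using right[of u] 3 u by simp
  qed
qed

lemma has_vector_derivative_fst:
  assumes "(y has_vector_derivative v) F"
  shows "((\<lambda>t. fst (y t)) has_real_derivative fst v) F"
proof -
  have "(\<lambda>x. fst (x *\<^sub>R v)) = (*) (fst v)"
    by (auto simp: fun_eq_iff)
  then show ?thesis
    using has_derivative_fst[OF assms[unfolded has_vector_derivative_def]]
    by (simp add: has_field_derivative_def)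
qed

lemma has_vector_derivative_snd:
  assumes "(y has_vector_derivative v) F"
  shows "((\<lambda>t. snd (y t)) has_real_derivative snd v) F"
proof -
  have "(\<lambda>x. snd (x *\<^sub>R v)) = (*) (snd v)"
    by (auto simp: fun_eq_iff)
  then show ?thesis
    using has_derivative_snd[OF assms[unfolded has_vector_derivative_def]]
    by (simp add: has_field_derivative_def)
qed

lemma increasing_bounded_tendsto_at_left:
  fixes f :: "real \<Rightarrow> real"
  assumes "a < T" and mono: "\<And>u v. a < u \<Longrightarrow> u \<le> v \<Longrightarrow> v < T \<Longrightarrow> f u \<le> f v"
    and bound: "\<And>s. a < s \<Longrightarrow> s < T \<Longrightarrow> f s \<le> B"
  obtains L where "(f \<longlongrightarrow> L) (at_left T)"
proof -
  have "at T within ({..<T} \<inter> {a<..<T}) = at_left T"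
    by (rule at_within_nhd[of _ "{a<..}"]) (use \<open>a < T\<close> in auto)
  moreover have "(f \<longlongrightarrow> Sup (f ` ({..<T} \<inter> {a<..<T}))) (at T within ({..<T} \<inter> {a<..<T}))"
    using mono bound by (intro Lim_left_bound) auto
  ultimately show thesis
    using that by simp
qed

lemma increasing_bounded_tendsto_at_top:
  fixes f :: "real \<Rightarrow> real"
  assumes mono: "\<And>u v. a < u \<Longrightarrow> u \<le> v \<Longrightarrow> f u \<le> f v" and bound: "\<And>s. a < s \<Longrightarrow> f s \<le> B"
  shows "(f \<longlongrightarrow> (SUP s\<in>{a<..}. f s)) at_top"
proof -
  have bdd: "bdd_above (f ` {a<..})"
    using bound by (intro bdd_aboveI[of _ B]) auto
  show ?thesis
  proof (rule order_tendstoI)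
    fix y
    assume "y < (SUP s\<in>{a<..}. f s)"
    then obtain s where s: "a < s" "y < f s"
      using less_cSUP_iff[OF _ bdd] by auto
    have "y < f t" if "s \<le> t" for t
      using mono[OF s(1) that] s(2) by linarith
    then show "\<forall>\<^sub>F t in at_top. y < f t"
      unfolding eventually_at_top_linorder by blast
  next
    fix y
    assume "(SUP s\<in>{a<..}. f s) < y"
    moreover have "f t \<le> (SUP s\<in>{a<..}. f s)" if "a + 1 \<le> t" for t
      using that by (intro cSUP_upper[OF _ bdd]) auto
    ultimately show "\<forall>\<^sub>F t in at_top. f t < y"
      unfolding eventually_at_top_linorder by (meson le_less_trans)
  qed
qed

lemma increasing_unbounded_filterlim_at_top:
  fixes f :: "real \<Rightarrow> real"
  assumes mono: "\<And>u v. a < u \<Longrightarrow> u \<le> v \<Longrightarrow> f u \<le> f v" and unbounded: "\<And>B. \<exists>s>a. B < f s"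
  shows "filterlim f at_top at_top"
  unfolding filterlim_at_top
proof
  fix B
  obtain s where s: "a < s" "B < f s"
    using unbounded by blast
  have "B \<le> f t" if "s \<le> t" for t
    using mono[OF s(1) that] s(2) by linarith
  then show "\<forall>\<^sub>F t in at_top. B \<le> f t"
    unfolding eventually_at_top_linorder by blast
qed

section \<open>The toy system\<close>

definition toy_field :: "(real \<Rightarrow> real) \<Rightarrow> real \<Rightarrow> real \<times> real \<Rightarrow> real \<times> real" where
  "toy_field g \<beta> p = (toy_rhs g \<beta> (fst p) (snd p), fst p)"

lemma tendsto_toy_rhs:
  assumes g: "\<And>x. isCont g x" and q: "(q \<longlongrightarrow> a) F" and x: "(x \<longlongrightarrow> b) F" and b: "b \<noteq> 0"
  shows "((\<lambda>s. toy_rhs g \<beta> (q s) (x s)) \<longlongrightarrow> toy_rhs g \<beta> a b) F"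
proof -
  have "((\<lambda>s. g (x s ^ 2)) \<longlongrightarrow> g (b ^ 2)) F"
    using g x by (intro isCont_tendsto_compose[of _ g] tendsto_intros)
  then show ?thesis
    unfolding toy_rhs_def using q x b by (intro tendsto_intros) auto
qed

lemma lipschitz_on_toy_field_rectangle:
  assumes g: "\<And>a b. lipschitzian_on {a..b} g" and c: "0 \<le> c" "c < 1" and m: "0 < m"
  obtains L where "L-lipschitz_on ({-c..c} \<times> {m..Mx}) (toy_field g \<beta>)"
proof -
  define Q where "Q = {-c..c} \<times> {m..Mx}"
  have Q: "compact Q" unfolding Q_def by (intro compact_Times compact_Icc)
  have "lipschitzian_on Q (\<lambda>x. inverse (snd x))"
    by (rule lipschitzian_on_compose[OF lipschitzian_on_snd lipschitzian_on_inverse_atLeast[OF m]])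
       (auto simp: Q_def)
  moreover have "lipschitzian_on Q (\<lambda>x. sqrt (1 - fst x * fst x))"
  proof (rule lipschitzian_on_compose[OF _ lipschitzian_on_sqrt_atLeast])
    show "lipschitzian_on Q (\<lambda>x. 1 - fst x * fst x)"
      by (intro lipschitzian_on_diff lipschitzian_on_const lipschitzian_on_mult[OF Q] lipschitzian_on_fst)
    show "0 < 1 - c * c"
      using c mult_strict_mono[of c 1 c 1] by simp
    have "fst x * fst x \<le> c * c" if "x \<in> Q" for x
      using that c mult_mono[of "\<bar>fst x\<bar>" c "\<bar>fst x\<bar>" c]
      by (auto simp: Q_def abs_mult_self_eq)
    then show "(\<lambda>x. 1 - fst x * fst x) ` Q \<subseteq> {1 - c * c..}"
      by auto
  qed
  moreover have "lipschitzian_on Q (\<lambda>x. g (snd x * snd x))"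
    by (rule lipschitzian_on_compose[OF lipschitzian_on_mult[OF Q] g, of snd snd "m * m" "Mx * Mx"])
       (use m in \<open>auto simp: Q_def intro!: mult_mono lipschitzian_on_snd\<close>)
  ultimately have "lipschitzian_on Q (\<lambda>x. toy_rhs g \<beta> (fst x) (snd x))"
    unfolding toy_rhs_def divide_inverse power2_eq_square
    by (intro lipschitzian_on_mult[OF Q] lipschitzian_on_add lipschitzian_on_diff lipschitzian_on_const
        lipschitzian_on_fst lipschitzian_on_snd)
  then obtain L where "L-lipschitz_on Q (\<lambda>x. toy_rhs g \<beta> (fst x) (snd x))"
    unfolding lipschitzian_on_def by blast
  moreover have "1-lipschitz_on Q (\<lambda>x::real \<times> real. fst x)"
    by (rule lipschitz_onI) (simp_all add: dist_fst_le)
  ultimately have "(sqrt (L\<^sup>2 + 1\<^sup>2))-lipschitz_on Q (toy_field g \<beta>)"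
    unfolding toy_field_def[abs_def] by (rule lipschitz_on_Pair)
  then show thesis
    using that unfolding Q_def by blast
qed

lemma toy_field_bounds_on_ball:
  assumes g: "\<And>a b. lipschitzian_on {a..b} g"
    and p0: "\<bar>fst p0\<bar> < 1" "0 < snd p0"
  obtains R L M where "0 < R" and "0 < M" and "L-lipschitz_on (cball p0 R) (toy_field g \<beta>)"
    and "\<And>x. x \<in> cball p0 R \<Longrightarrow> norm (toy_field g \<beta> x) \<le> M"
    and "\<And>x. x \<in> cball p0 R \<Longrightarrow> \<bar>fst x\<bar> < 1 \<and> 0 < snd x"
proof -
  define R where "R = min ((1 - \<bar>fst p0\<bar>) / 2) (snd p0 / 2)"
  define c where "c = \<bar>fst p0\<bar> + R"
  have R: "0 < R" "c < 1" "R < snd p0"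
    using p0 unfolding R_def c_def min_def by (auto simp: field_simps)
  have ball_rectangle: "cball p0 R \<subseteq> {-c..c} \<times> {snd p0 - R..snd p0 + R}"
  proof
    fix x assume "x \<in> cball p0 R"
    then have "dist (fst p0) (fst x) \<le> R" "dist (snd p0) (snd x) \<le> R"
      using dist_fst_le[of p0 x] dist_snd_le[of p0 x] by auto
    then show "x \<in> {-c..c} \<times> {snd p0 - R..snd p0 + R}"
      by (cases x) (auto simp: c_def dist_real_def abs_le_iff)
  qed
  obtain L where "L-lipschitz_on ({-c..c} \<times> {snd p0 - R..snd p0 + R}) (toy_field g \<beta>)"
    using lipschitz_on_toy_field_rectangle[OF g, of c "snd p0 - R"] R by (auto simp: c_def)
  then have L: "L-lipschitz_on (cball p0 R) (toy_field g \<beta>)"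
    using ball_rectangle by (rule lipschitz_on_subset)
  have "bounded (toy_field g \<beta> ` cball p0 R)"
    by (intro compact_imp_bounded compact_continuous_image lipschitz_on_continuous_on[OF L]
        compact_cball)
  then obtain M where "0 < M" "\<And>x. x \<in> cball p0 R \<Longrightarrow> norm (toy_field g \<beta> x) \<le> M"
    by (auto simp: bounded_pos)
  moreover have "\<bar>fst x\<bar> < 1 \<and> 0 < snd x" if "x \<in> cball p0 R" for x
    using ball_rectangle that R by force
  ultimately show thesis
    using that R(1) L by blast
qed

lemma toy_field_local_existence:
  assumes g: "\<And>a b. lipschitzian_on {a..b} g"
    and p0: "\<bar>fst p0\<bar> < 1" "0 < snd p0"
  obtains h y where "h > 0" and "y t0 = p0"
    and "\<And>t. t \<in> {t0..t0+h} \<Longrightarrow> \<bar>fst (y t)\<bar> < 1 \<and> 0 < snd (y t)"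
    and "\<And>t. t \<in> {t0..t0+h} \<Longrightarrow>
      (y has_vector_derivative toy_field g \<beta> (y t)) (at t within {t0..t0+h})"
proof -
  obtain R L M where R: "0 < R" and M: "0 < M" and L: "L-lipschitz_on (cball p0 R) (toy_field g \<beta>)"
    and bound: "\<And>x. x \<in> cball p0 R \<Longrightarrow> norm (toy_field g \<beta> x) \<le> M"
    and M0: "\<And>x. x \<in> cball p0 R \<Longrightarrow> \<bar>fst x\<bar> < 1 \<and> 0 < snd x"
    using toy_field_bounds_on_ball[OF g p0] by metis
  define h where "h = min (R / M) (1 / (2 * (L + 1)))"
  have L_nonneg: "0 \<le> L"
    using lipschitz_on_nonneg[OF L] .
  have h: "0 < h" "h * M \<le> R" "h * L < 1"
  proof -
    show "0 < h"
      using R M L_nonneg by (simp add: h_def)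
    have "h \<le> R / M" "h \<le> 1 / (2 * (L + 1))"
      by (simp_all add: h_def)
    then show "h * M \<le> R" "h * L < 1"
      using M L_nonneg \<open>0 < h\<close> by (simp_all add: field_simps)
  qed
  obtain y where "y t0 = p0"
    and "\<And>t. t \<in> {t0..t0+h} \<Longrightarrow> y t \<in> cball p0 R"
    and "\<And>t. t \<in> {t0..t0+h} \<Longrightarrow>
      (y has_vector_derivative toy_field g \<beta> (y t)) (at t within {t0..t0+h})"
    using picard_lindeloef_local[OF h(1) less_imp_le[OF R] bound L h(2,3)] by blast
  then show thesis
    using that h(1) M0 by blast
qed

lemma sdom_ereal: "sdom (ereal T) = {0<..<T}"
  by (auto simp: sdom_def)

lemma sdom_infinity: "sdom \<infinity> = {0<..}"
  by (auto simp: sdom_def)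

lemma open_sdom: "open (sdom smax)"
  by (cases smax) (simp_all add: sdom_ereal sdom_infinity, simp add: sdom_def)

lemma sdom_downward_closed:
  "v \<in> sdom smax \<Longrightarrow> 0 < x \<Longrightarrow> x \<le> v \<Longrightarrow> x \<in> sdom smax"
  by (auto simp: sdom_def intro: le_less_trans[of "ereal x" "ereal v"])

lemma toy_solutionD:
  assumes "toy_solution g \<beta> \<rho> r smax" and "s \<in> sdom smax"
  shows "-1 < \<rho> s" "\<rho> s < 1" "0 < r s"
    and "(\<rho> has_real_derivative toy_rhs g \<beta> (\<rho> s) (r s)) (at s)"
    and "(r has_real_derivative \<rho> s) (at s)"
  using assms unfolding toy_solution_def by blast+

lemma toy_solution_deriv:
  "toy_solution g \<beta> \<rho> r smax \<Longrightarrow> s \<in> sdom smax \<Longrightarrow> deriv \<rho> s = toy_rhs g \<beta> (\<rho> s) (r s)"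
  by (rule DERIV_imp_deriv[OF toy_solutionD(4)])

lemma toy_solution_isCont_deriv:
  assumes g: "\<And>x. isCont g x" and sol: "toy_solution g \<beta> \<rho> r smax" and s: "s \<in> sdom smax"
  shows "isCont (deriv \<rho>) s"
proof -
  have "isCont (\<lambda>u. toy_rhs g \<beta> (\<rho> u) (r u)) s"
    unfolding isCont_def
    using toy_solutionD[OF sol s] by (intro tendsto_toy_rhs g) (auto intro: DERIV_isCont[unfolded isCont_def])
  moreover have "\<forall>\<^sub>F u in nhds s. toy_rhs g \<beta> (\<rho> u) (r u) = deriv \<rho> u"
    using eventually_nhds_in_open[OF open_sdom s]
    by eventually_elim (simp add: toy_solution_deriv[OF sol])
  ultimately show ?thesis
    using isCont_cong by metis
qed

lemma toy_solution_monotone: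
  assumes sol: "toy_solution g \<beta> \<rho> r smax"
    and decr: "\<forall>s\<in>sdom smax. deriv \<rho> s < 0 \<and> \<rho> s > 0"
    and u: "u \<in> sdom smax" and v: "v \<in> sdom smax" and "u \<le> v"
  shows "\<rho> v \<le> \<rho> u" and "r u \<le> r v" and "r v - v \<le> r u - u"
proof -
  have x: "x \<in> sdom smax" if "u \<le> x" "x \<le> v" for x
    using sdom_downward_closed[OF v] u that by (auto simp: sdom_def)
  show "\<rho> v \<le> \<rho> u"
    using x toy_solutionD(4)[OF sol] toy_solution_deriv[OF sol] decr
    by (intro DERIV_nonpos_imp_nonincreasing[OF \<open>u \<le> v\<close>]) (metis less_imp_le)
  show "r u \<le> r v"
    using x toy_solutionD(5)[OF sol] decr
    by (intro DERIV_nonneg_imp_nondecreasing[OF \<open>u \<le> v\<close>]) (metis less_imp_le)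
  have "((\<lambda>s. r s - s) has_real_derivative \<rho> x - 1) (at x) \<and> \<rho> x - 1 \<le> 0"
    if "u \<le> x" "x \<le> v" for x
    using toy_solutionD(2,5)[OF sol x[OF that]] by (auto intro!: derivative_eq_intros)
  then show "r v - v \<le> r u - u"
    by (intro DERIV_nonpos_imp_nonincreasing[OF \<open>u \<le> v\<close>, where f="\<lambda>s. r s - s"]) blast
qed

lemma sdom_first_failure:
  fixes P :: "real \<Rightarrow> bool"
  assumes s1: "s1 \<in> sdom smax" "\<not> P s1" and s0: "0 < s0" "\<forall>s\<in>{0<..<s0}. P s"
  obtains ss where "ss \<in> sdom smax" "0 < ss" "\<forall>u\<in>{0<..<ss}. P u"
    and "\<And>d. 0 < d \<Longrightarrow> \<exists>s. ss \<le> s \<and> s < ss + d \<and> \<not> P s"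
proof -
  define Bad where "Bad = {s \<in> sdom smax. \<not> P s}"
  define ss where "ss = Inf Bad"
  have s1_Bad: "s1 \<in> Bad"
    using s1 by (simp add: Bad_def)
  have bdd: "bdd_below Bad"
    by (rule bdd_belowI[of _ 0]) (auto simp: Bad_def sdom_def)
  have "s0 \<le> s" if "s \<in> Bad" for s
    using that s0(2) by (force simp: Bad_def sdom_def)
  then have "s0 \<le> ss"
    unfolding ss_def using s1_Bad by (intro cInf_greatest) auto
  moreover have "ss \<le> s1"
    unfolding ss_def using s1_Bad bdd by (rule cInf_lower)
  ultimately have ss: "ss \<in> sdom smax" "0 < ss"
    using s1 s0(1) sdom_downward_closed[of s1 smax ss] by auto
  moreover have "P u" if u: "u \<in> {0<..<ss}" for u
  proof (rule ccontr)
    assume "\<not> P u"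
    then have "u \<in> Bad"
      using u ss sdom_downward_closed[of ss smax u] by (auto simp: Bad_def)
    then show False
      using cInf_lower[OF _ bdd, of u] u by (auto simp: ss_def)
  qed
  moreover have "\<exists>s. ss \<le> s \<and> s < ss + d \<and> \<not> P s" if d: "0 < d" for d
  proof (rule ccontr)
    assume "\<nexists>s. ss \<le> s \<and> s < ss + d \<and> \<not> P s"
    then have "ss + d \<le> s" if "s \<in> Bad" for s
      using that cInf_lower[OF _ bdd, of s] by (force simp: Bad_def ss_def)
    then have "ss + d \<le> ss"
      unfolding ss_def using s1_Bad by (intro cInf_greatest) auto
    then show False
      using d by simp
  qed
  ultimately show thesis
    using that by blast
qed

lemma sign_pattern_persists:
  fixes p q :: "real \<Rightarrow> real"
  assumes cont: "\<And>s. s \<in> sdom smax \<Longrightarrow> isCont p s \<and> isCont q s"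
    and init: "0 < s0" "ereal s0 \<le> smax" "\<forall>s\<in>{0<..<s0}. q s < 0 \<and> p s > 0"
    and no_zero_p: "\<not> (\<exists>s1\<in>sdom smax. (\<forall>s\<in>{0<..<s1}. p s * q s < 0) \<and> p s1 = 0)"
    and no_zero_q: "\<not> (\<exists>s1\<in>sdom smax. (\<forall>s\<in>{0<..<s1}. p s * q s < 0) \<and> q s1 = 0)"
  shows "\<forall>s\<in>sdom smax. q s < 0 \<and> p s > 0"
proof (rule ccontr)
  define good where "good s \<longleftrightarrow> q s < 0 \<and> p s > 0" for s
  assume "\<not> (\<forall>s\<in>sdom smax. q s < 0 \<and> p s > 0)"
  then obtain s1 where "s1 \<in> sdom smax" "\<not> good s1"
    by (auto simp: good_def)
  then obtain ss where ss: "ss \<in> sdom smax" "0 < ss" "\<forall>u\<in>{0<..<ss}. good u"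
    and fails: "\<And>d. 0 < d \<Longrightarrow> \<exists>s. ss \<le> s \<and> s < ss + d \<and> \<not> good s"
    using sdom_first_failure[of s1 smax good s0] init(1,3) by (auto simp: good_def)
  have left: "\<forall>\<^sub>F u in at_left ss. good u"
    using eventually_at_left_real[OF ss(2)] by eventually_elim (use ss(3) in auto)
  have "0 \<le> p ss"
    using cont[OF ss(1)] left
    by (intro tendsto_lowerbound[where F="at_left ss" and f=p])
       (auto simp: isCont_def filterlim_at_split good_def elim: eventually_mono)
  moreover have "q ss \<le> 0"
    using cont[OF ss(1)] left
    by (intro tendsto_upperbound[where F="at_left ss" and f=q])
       (auto simp: isCont_def filterlim_at_split good_def elim: eventually_mono)
  moreover have "\<forall>s\<in>{0<..<ss}. p s * q s < 0"
    using ss(3) by (auto simp: good_def mult_pos_neg)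
  ultimately have "good ss"
    using no_zero_p no_zero_q ss(1) by (force simp: good_def)
  then have "\<forall>\<^sub>F u in at ss. good u"
    using cont[OF ss(1)] unfolding good_def isCont_def
    by (intro eventually_conj) (auto dest: order_tendstoD)
  then obtain d where d: "0 < d" "\<And>u. u \<noteq> ss \<Longrightarrow> dist u ss < d \<Longrightarrow> good u"
    unfolding eventually_at by blast
  then show False
    using fails[OF d(1)] \<open>good ss\<close> by (force simp: dist_real_def)
qed

lemma max_toy_tip_solution_decreasing:
  assumes g_cont: "\<And>x. isCont g x" and \<beta>: "\<beta> \<in> X_toy g"
    and max: "max_toy_tip_solution g \<beta> \<rho> r smax"
  shows "\<forall>s\<in>sdom smax. deriv \<rho> s < 0 \<and> \<rho> s > 0"
proof -
  have sol: "toy_solution g \<beta> \<rho> r smax"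
    and "\<exists>s0>0. ereal s0 \<le> smax \<and> (\<forall>s\<in>{0<..<s0}. deriv \<rho> s < 0 \<and> \<rho> s > 0)"
    using max by (simp_all add: max_toy_tip_solution_def toy_tip_solution_def)
  then obtain s0 where "0 < s0" "ereal s0 \<le> smax" "\<forall>s\<in>{0<..<s0}. deriv \<rho> s < 0 \<and> \<rho> s > 0"
    by blast
  moreover have "isCont \<rho> s \<and> isCont (deriv \<rho>) s" if "s \<in> sdom smax" for s
    using toy_solution_isCont_deriv[OF g_cont sol that] toy_solutionD(4)[OF sol that]
    by (auto intro: DERIV_isCont)
  ultimately show ?thesis
    using \<beta> max by (intro sign_pattern_persists) (auto simp: X_toy_def A_toy_def B_toy_def)
qed

lemma toy_solution_extend:
  assumes g: "\<And>x. isCont g x"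
    and sol: "toy_solution g \<beta> \<rho> r (ereal T)"
    and \<rho>_lim: "(\<rho> \<longlongrightarrow> fst (y T)) (at_left T)" and r_lim: "(r \<longlongrightarrow> snd (y T)) (at_left T)"
    and h: "0 < h"
    and y_M0: "\<And>t. t \<in> {T..T+h} \<Longrightarrow> \<bar>fst (y t)\<bar> < 1 \<and> 0 < snd (y t)"
    and y_ode: "\<And>t. t \<in> {T..T+h} \<Longrightarrow>
      (y has_vector_derivative toy_field g \<beta> (y t)) (at t within {T..T+h})"
  shows "toy_solution g \<beta> (\<lambda>s. if s < T then \<rho> s else fst (y s))
    (\<lambda>s. if s < T then r s else snd (y s)) (ereal (T + h))"
proof -
  define \<rho>' where "\<rho>' s = (if s < T then \<rho> s else fst (y s))" for s
  define r' where "r' s = (if s < T then r s else snd (y s))" for s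
  define F where "F s = toy_rhs g \<beta> (\<rho>' s) (r' s)" for s
  have T: "0 < T"
    using sol by (simp add: toy_solution_def)
  have left: "(\<rho>' has_real_derivative F s) (at s) \<and> (r' has_real_derivative \<rho>' s) (at s)"
    if s: "s \<in> {0<..<T}" for s
  proof -
    have "(\<rho> has_real_derivative F s) (at s)" "(r has_real_derivative \<rho>' s) (at s)"
      using toy_solutionD(4,5)[OF sol] s by (simp_all add: sdom_ereal F_def \<rho>'_def r'_def)
    moreover have "\<rho> u = \<rho>' u" "r u = r' u" if "u \<in> {0<..<T}" for u
      using that by (simp_all add: \<rho>'_def r'_def)
    ultimately show ?thesis
      using s by (blast intro: has_field_derivative_transform_within_open[OF _ open_greaterThanLessThan])
  qed
  have right: "(\<rho>' has_real_derivative F s) (at s within {T..T+h}) \<and>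
      (r' has_real_derivative \<rho>' s) (at s within {T..T+h})" if s: "s \<in> {T..T+h}" for s
  proof -
    have "((\<lambda>t. fst (y t)) has_real_derivative F s) (at s within {T..T+h})"
      "((\<lambda>t. snd (y t)) has_real_derivative \<rho>' s) (at s within {T..T+h})"
      using has_vector_derivative_fst[OF y_ode[OF s]] has_vector_derivative_snd[OF y_ode[OF s]] s
      by (simp_all add: toy_field_def F_def \<rho>'_def r'_def)
    moreover have "fst (y u) = \<rho>' u" "snd (y u) = r' u" if "u \<in> {T..T+h}" for u
      using that by (simp_all add: \<rho>'_def r'_def)
    ultimately show ?thesis
      using s by (blast intro: has_field_derivative_transform_within[OF _ zero_less_one])
  qed
  have "\<forall>\<^sub>F u in at_left T. \<rho> u = \<rho>' u" "\<forall>\<^sub>F u in at_left T. r u = r' u"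
    using eventually_at_left_real[OF T] by (auto elim!: eventually_mono simp: \<rho>'_def r'_def)
  moreover have "\<rho>' T = fst (y T)" "r' T = snd (y T)"
    by (simp_all add: \<rho>'_def r'_def)
  ultimately have \<rho>'_lim: "(\<rho>' \<longlongrightarrow> \<rho>' T) (at_left T)" and r'_lim: "(r' \<longlongrightarrow> r' T) (at_left T)"
    using \<rho>_lim r_lim tendsto_cong by metis+
  have F_lim: "(F \<longlongrightarrow> F T) (at_left T)"
    unfolding F_def using y_M0[of T] h by (intro tendsto_toy_rhs g \<rho>'_lim r'_lim) (auto simp: r'_def)
  have \<rho>'_cont: "isCont \<rho>' s" and F_cont: "isCont F s" if s: "s \<in> {0<..<T}" for s
  proof -
    show "isCont \<rho>' s"
      using left[OF s] by (auto intro: DERIV_isCont)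
    moreover have "isCont r' s"
      using left[OF s] by (auto intro: DERIV_isCont)
    moreover have "r' s \<noteq> 0"
      using toy_solutionD(3)[OF sol, of s] s by (simp add: sdom_ereal r'_def)
    ultimately show "isCont F s"
      unfolding F_def isCont_def by (intro tendsto_toy_rhs g)
  qed
  have "(\<rho>' has_real_derivative F s) (at s) \<and> (r' has_real_derivative \<rho>' s) (at s)"
    if s: "s \<in> {0<..<T+h}" for s
  proof
    have "T < T + h"
      using h by simp
    show "(\<rho>' has_real_derivative F s) (at s)"
      by (rule DERIV_glue[OF T \<open>T < T + h\<close> _ _ F_cont \<rho>'_lim F_lim s])
         (use left[THEN conjunct1] right[THEN conjunct1] in auto)
    show "(r' has_real_derivative \<rho>' s) (at s)"
      by (rule DERIV_glue[OF T \<open>T < T + h\<close> _ _ \<rho>'_cont r'_lim \<rho>'_lim s])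
         (use left[THEN conjunct2] right[THEN conjunct2] in auto)
  qed
  moreover have "-1 < \<rho>' s \<and> \<rho>' s < 1 \<and> 0 < r' s" if s: "s \<in> {0<..<T+h}" for s
    using s toy_solutionD(1-3)[OF sol, of s] y_M0[of s]
    by (cases "s < T") (auto simp: sdom_ereal \<rho>'_def r'_def abs_less_iff)
  ultimately show ?thesis
    using T h by (simp add: toy_solution_def sdom_ereal F_def \<rho>'_def[abs_def] r'_def[abs_def])
qed

lemma toy_solution_left_limits:
  assumes sol: "toy_solution g \<beta> \<rho> r (ereal T)"
    and decr: "\<forall>s\<in>sdom (ereal T). deriv \<rho> s < 0 \<and> \<rho> s > 0"
  obtains \<rho>L rL where "(\<rho> \<longlongrightarrow> \<rho>L) (at_left T)" "(r \<longlongrightarrow> rL) (at_left T)"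
    and "0 \<le> \<rho>L" "\<rho>L < 1" "0 < rL"
proof -
  define t1 where "t1 = T / 2"
  have T: "0 < T" "0 < t1" "t1 < T" "t1 \<in> sdom (ereal T)"
    using sol by (auto simp: toy_solution_def t1_def sdom_ereal)
  have mono: "\<rho> v \<le> \<rho> u" "r u \<le> r v" "r v - v \<le> r u - u" if "0 < u" "u \<le> v" "v < T" for u v
    using toy_solution_monotone[OF sol decr, of u v] that by (auto simp: sdom_ereal)
  have pos: "0 < \<rho> s" if "0 < s" "s < T" for s
    using decr that by (simp add: sdom_ereal)
  obtain rL where rL: "(r \<longlongrightarrow> rL) (at_left T)"
  proof (rule increasing_bounded_tendsto_at_left[OF T(1), of r "r t1 + T"])
    show "r s \<le> r t1 + T" if "0 < s" "s < T" for s
      using mono(2)[of s t1] mono(3)[of t1 s] that T by (cases "s \<le> t1") auto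
  qed (use mono in auto)
  obtain \<rho>L' where "((\<lambda>s. - \<rho> s) \<longlongrightarrow> \<rho>L') (at_left T)"
    by (rule increasing_bounded_tendsto_at_left[OF T(1), of "\<lambda>s. - \<rho> s" 0])
       (use mono pos in \<open>auto simp: less_imp_le\<close>)
  then have \<rho>L: "(\<rho> \<longlongrightarrow> - \<rho>L') (at_left T)"
    using tendsto_minus by fastforce
  have ev: "\<forall>\<^sub>F s in at_left T. 0 \<le> \<rho> s \<and> \<rho> s \<le> \<rho> t1 \<and> r t1 \<le> r s"
    using eventually_at_left_real[OF T(3)] by eventually_elim (use mono pos T in \<open>auto intro: less_imp_le\<close>)
  have "0 \<le> - \<rho>L'" "- \<rho>L' \<le> \<rho> t1" "r t1 \<le> rL"
    by (rule tendsto_lowerbound[OF \<rho>L] tendsto_upperbound[OF \<rho>L] tendsto_lowerbound[OF rL];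
        use ev in \<open>auto elim: eventually_mono\<close>)+
  moreover have "\<rho> t1 < 1" "0 < r t1"
    using toy_solutionD(2,3)[OF sol T(4)] by auto
  ultimately show thesis
    using that[OF \<rho>L rL] by simp
qed

lemma max_toy_tip_solution_global:
  assumes g_cont: "\<And>x. isCont g x" and g_lip: "\<And>a b. lipschitzian_on {a..b} g"
    and max: "max_toy_tip_solution g \<beta> \<rho> r smax"
    and decr: "\<forall>s\<in>sdom smax. deriv \<rho> s < 0 \<and> \<rho> s > 0"
  shows "smax = \<infinity>"
proof (rule ccontr)
  assume "smax \<noteq> \<infinity>"
  moreover have sol: "toy_solution g \<beta> \<rho> r smax"
    using max by (simp add: max_toy_tip_solution_def toy_tip_solution_def)
  ultimately obtain T where T: "smax = ereal T"
    by (cases smax) (auto simp: toy_solution_def)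
  obtain \<rho>L rL where lim: "(\<rho> \<longlongrightarrow> \<rho>L) (at_left T)" "(r \<longlongrightarrow> rL) (at_left T)"
    and "0 \<le> \<rho>L" "\<rho>L < 1" "0 < rL"
    using toy_solution_left_limits[OF sol[unfolded T] decr[unfolded T]] by blast
  then obtain h y where h: "0 < h" and "y T = (\<rho>L, rL)"
    and "\<And>t. t \<in> {T..T+h} \<Longrightarrow> \<bar>fst (y t)\<bar> < 1 \<and> 0 < snd (y t)"
    and "\<And>t. t \<in> {T..T+h} \<Longrightarrow>
      (y has_vector_derivative toy_field g \<beta> (y t)) (at t within {T..T+h})"
    using toy_field_local_existence[OF g_lip, of "(\<rho>L, rL)" T \<beta>] by auto
  then have "toy_solution g \<beta> (\<lambda>s. if s < T then \<rho> s else fst (y s))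
      (\<lambda>s. if s < T then r s else snd (y s)) (ereal (T + h))"
    using lim by (intro toy_solution_extend[OF g_cont sol[unfolded T]]) auto
  moreover have "ereal T \<le> ereal (T + h)"
    using h by simp
  moreover have "\<forall>s\<in>sdom (ereal T). (if s < T then \<rho> s else fst (y s)) = \<rho> s \<and>
      (if s < T then r s else snd (y s)) = r s"
    by (simp add: sdom_ereal)
  ultimately have "ereal (T + h) = smax"
    using max unfolding max_toy_tip_solution_def T by blast
  then show False
    using h T by simp
qed

lemma toy_rhs_pos:
  assumes q: "0 < q" "q \<le> a" and a: "a < 1" and x: "0 < x" and \<beta>: "0 < \<beta>" and g: "0 < g (x\<^sup>2)"
    and large: "1 < \<beta> * sqrt (1 - a\<^sup>2) * (x * g (x\<^sup>2))"
  shows "0 < toy_rhs g \<beta> q x"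
proof -
  have "q\<^sup>2 \<le> a\<^sup>2" using q by (intro power_mono) auto
  moreover have "a\<^sup>2 < 1" using q a by (simp add: abs_square_less_1)
  ultimately have "sqrt (1 - a\<^sup>2) \<le> sqrt (1 - q\<^sup>2)" "q\<^sup>2 < 1" by auto
  moreover have "\<beta> * (x * g (x\<^sup>2)) \<le> (\<beta> * x\<^sup>2 * g (x\<^sup>2) + q) / x"
    using q x by (simp add: field_simps power2_eq_square)
  ultimately have "sqrt (1 - a\<^sup>2) * (\<beta> * (x * g (x\<^sup>2))) \<le> sqrt (1 - q\<^sup>2) * ((\<beta> * x\<^sup>2 * g (x\<^sup>2) + q) / x)"
    using \<beta> x g by (intro mult_mono) auto
  then have "0 < -1 + sqrt (1 - q\<^sup>2) * (\<beta> * x\<^sup>2 * g (x\<^sup>2) + q) / x"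
    using large by (simp add: algebra_simps)
  moreover have "0 < 3/2 * (1 - q\<^sup>2) / x"
    using \<open>q\<^sup>2 < 1\<close> x by simp
  ultimately show ?thesis
    unfolding toy_rhs_def by (metis mult_pos_pos)
qed

lemma toy_solution_radius_bounded:
  assumes G: "condG g" and \<beta>: "0 < \<beta>"
    and sol: "toy_solution g \<beta> \<rho> r \<infinity>" and decr: "\<forall>s\<in>sdom \<infinity>. deriv \<rho> s < 0 \<and> \<rho> s > 0"
  shows "\<exists>B. \<forall>s>0. r s \<le> B"
proof (rule ccontr)
  assume unbounded: "\<nexists>B. \<forall>s>0. r s \<le> B"
  have mono: "\<rho> v \<le> \<rho> u" "r u \<le> r v" if "0 < u" "u \<le> v" for u v
    using toy_solution_monotone[OF sol decr, of u v] that by (auto simp: sdom_infinity)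
  define c where "c = sqrt (1 - (\<rho> 1)\<^sup>2)"
  have \<rho>1: "0 < \<rho> 1" "\<rho> 1 < 1"
    using decr toy_solutionD(2)[OF sol] by (auto simp: sdom_infinity)
  then have c: "0 < c"
    unfolding c_def by (simp add: abs_square_less_1)
  have "filterlim r at_top at_top"
    using mono(2) unbounded by (intro increasing_unbounded_filterlim_at_top[of 0]) (auto simp: not_le)
  with G have "filterlim (\<lambda>s. r s * g ((r s)\<^sup>2)) at_top at_top"
    unfolding condG_def using filterlim_compose[of "\<lambda>v. v * g (v\<^sup>2)"] by blast
  then have "\<forall>\<^sub>F s in at_top. 1 / (\<beta> * c) < r s * g ((r s)\<^sup>2) \<and> 1 \<le> s"
    by (intro eventually_conj eventually_ge_at_top) (simp add: filterlim_at_top_dense)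
  then obtain s where s: "1 / (\<beta> * c) < r s * g ((r s)\<^sup>2)" "1 \<le> s"
    using eventually_happens[of _ at_top] by (auto simp: eventually_at_top_linorder)
  have r_pos: "0 < r s"
    using toy_solutionD(3)[OF sol] s(2) by (simp add: sdom_infinity)
  have "0 < toy_rhs g \<beta> (\<rho> s) (r s)"
  proof (rule toy_rhs_pos[OF _ _ \<rho>1(2) r_pos \<beta>])
    show "0 < \<rho> s" "\<rho> s \<le> \<rho> 1"
      using decr mono(1)[of 1 s] s(2) by (auto simp: sdom_infinity)
    show "0 < g ((r s)\<^sup>2)"
      using G r_pos by (simp add: condG_def)
    show "1 < \<beta> * sqrt (1 - (\<rho> 1)\<^sup>2) * (r s * g ((r s)\<^sup>2))"
      using s(1) \<beta> c by (simp add: c_def[symmetric] field_simps)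
  qed
  moreover have "toy_rhs g \<beta> (\<rho> s) (r s) < 0"
    using decr toy_solution_deriv[OF sol] s(2) by (force simp: sdom_infinity)
  ultimately show False
    by simp
qed

lemma toy_solution_rho_tendsto_zero:
  assumes sol: "toy_solution g \<beta> \<rho> r \<infinity>" and decr: "\<forall>s\<in>sdom \<infinity>. deriv \<rho> s < 0 \<and> \<rho> s > 0"
    and B: "\<And>s. 0 < s \<Longrightarrow> r s \<le> B"
  shows "(\<rho> \<longlongrightarrow> 0) at_top"
proof (rule order_tendstoI)
  fix a :: real
  assume "a < 0"
  moreover have "0 < \<rho> s" if "1 \<le> s" for s
    using decr that by (simp add: sdom_infinity)
  ultimately have "a < \<rho> s" if "1 \<le> s" for s
    using that by force
  then show "\<forall>\<^sub>F s in at_top. a < \<rho> s"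
    unfolding eventually_at_top_linorder by blast
next
  fix a :: real
  assume a: "0 < a"
  have small: "\<rho> s < a" if s: "1 + (B - r 1) / a < s" for s
  proof (rule ccontr)
    assume "\<not> \<rho> s < a"
    have "0 \<le> (B - r 1) / a"
      using B[of 1] a by simp
    then have "1 \<le> s" using s by simp
    have "r 1 - a * 1 \<le> r s - a * s"
    proof (rule DERIV_nonneg_imp_nondecreasing[OF \<open>1 \<le> s\<close>])
      fix x
      assume x: "1 \<le> x" "x \<le> s"
      have "((\<lambda>u. r u - a * u) has_real_derivative \<rho> x - a) (at x)"
        using toy_solutionD(5)[OF sol, of x] x by (auto simp: sdom_infinity intro!: derivative_eq_intros)
      moreover have "a \<le> \<rho> x"
        using toy_solution_monotone(1)[OF sol decr, of x s] x \<open>\<not> \<rho> s < a\<close> by (simp add: sdom_infinity)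
      ultimately show "\<exists>y. ((\<lambda>u. r u - a * u) has_real_derivative y) (at x) \<and> 0 \<le> y"
        by auto
    qed
    then have "a * (s - 1) \<le> B - r 1"
      using B[of s] \<open>1 \<le> s\<close> by (simp add: algebra_simps)
    then show False
      using s a by (simp add: field_simps)
  qed
  show "\<forall>\<^sub>F s in at_top. \<rho> s < a"
    by (rule eventually_mono[OF eventually_gt_at_top small])
qed

lemma toy_solution_limits_at_top:
  assumes G: "condG g" and \<beta>: "0 < \<beta>"
    and sol: "toy_solution g \<beta> \<rho> r \<infinity>" and decr: "\<forall>s\<in>sdom \<infinity>. deriv \<rho> s < 0 \<and> \<rho> s > 0"
  shows "(\<rho> \<longlongrightarrow> 0) at_top" and "\<exists>rinf>0. (r \<longlongrightarrow> rinf) at_top"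
proof -
  obtain B where B: "\<And>s. 0 < s \<Longrightarrow> r s \<le> B"
    using toy_solution_radius_bounded[OF assms] by blast
  then show "(\<rho> \<longlongrightarrow> 0) at_top"
    by (rule toy_solution_rho_tendsto_zero[OF sol decr])
  have "(r \<longlongrightarrow> (SUP s\<in>{0<..}. r s)) at_top"
    using toy_solution_monotone(2)[OF sol decr] B
    by (intro increasing_bounded_tendsto_at_top) (auto simp: sdom_infinity)
  moreover have "r 1 \<le> (SUP s\<in>{0<..}. r s)"
    using B by (intro cSUP_upper bdd_aboveI[of _ B]) auto
  moreover have "0 < r 1"
    using toy_solutionD(3)[OF sol] by (simp add: sdom_infinity)
  ultimately show "\<exists>rinf>0. (r \<longlongrightarrow> rinf) at_top"
    by (intro exI[of _ "SUP s\<in>{0<..}. r s"]) simp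
qed

theorem lemma3p4:
  fixes g :: "real \<Rightarrow> real" and \<beta> :: real
    and \<rho> r :: "real \<Rightarrow> real" and smax :: ereal
  assumes "real_analytic_on UNIV g"
    and "condG g"
    and "X_toy g \<noteq> {}"
    and "\<beta> \<in> X_toy g"
    and "max_toy_tip_solution g \<beta> \<rho> r smax"
  shows "toy_steady_tip_growth g \<beta> \<rho> r smax"
proof -
  have g_cont: "\<And>x. isCont g x"
    using real_analytic_on_imp_DERIV[OF assms(1)] by (auto intro: DERIV_isCont)
  have g_lip: "\<And>a b. lipschitzian_on {a..b} g"
    using real_analytic_on_imp_C1[OF assms(1)] by (auto intro: lipschitzian_on_Icc_if_continuous_deriv)
  have decr: "\<forall>s\<in>sdom smax. deriv \<rho> s < 0 \<and> \<rho> s > 0"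
    by (rule max_toy_tip_solution_decreasing[OF g_cont assms(4,5)])
  have smax: "smax = \<infinity>"
    by (rule max_toy_tip_solution_global[OF g_cont g_lip assms(5) decr])
  have tip: "toy_tip_solution g \<beta> \<rho> r \<infinity>"
    using assms(5) smax by (simp add: max_toy_tip_solution_def)
  have "\<beta> > 0"
    using assms(4) by (simp add: X_toy_def)
  with assms(2) tip decr[unfolded smax] show ?thesis
    using toy_solution_limits_at_top[of g \<beta> \<rho> r]
    by (auto simp: toy_steady_tip_growth_def toy_tip_solution_def sdom_infinity smax)
qed

end
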